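(* Let $n\ge 1$, $\theta\in(0,\pi)$, let $\chi_0$ be a positive definite $n\times n$ Hermitian matrix, let $\omega$ be an $n\times n$ Hermitian matrix with $\omega\in\Gamma_{\chi_0,\theta}$, and let $\epsilon_1>0$. Then there exists $\epsilon_2>0$ depending only on $\epsilon_1,\theta,n$ such that for every Hermitian matrix $\chi$ with $\chi_0\le\chi\le(1+\epsilon_2)\chi_0$ we have $\omega+2\epsilon_1\chi\in\Gamma_{\chi,\theta}$.
   Context: For a Hermitian matrix $\omega$ and a positive definite Hermitian matrix $\chi$, let $\lambda_1,\dots,\lambda_n$ be the eigenvalues of $\chi^{-1}\omega$ (the eigenvalues of $\omega$ with respect to $\chi$); $\mathrm{arccot}$ takes values in $(0,\pi)$. We write $\omega\in\Gamma_{\chi,\theta}$ if $\sum_{i\in I}\mathrm{arccot}(\lambda_i)<\theta$ for every $I\subset\{1,\dots,n\}$ with $|I|=n-1$. Inequalities between Hermitian matrices are in the sense of positive semidefiniteness. *)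

theory Defs
  imports Complex_Main "Jordan_Normal_Form.Schur_Decomposition"
    "Jordan_Normal_Form.Gauss_Jordan_Elimination" "Jordan_Normal_Form.Char_Poly"
begin

definition arccot :: "real \<Rightarrow> real" where
  "arccot x = pi / 2 - arctan x"

definition hermitian :: "nat \<Rightarrow> complex mat \<Rightarrow> bool" where
  "hermitian n A \<longleftrightarrow> A \<in> carrier_mat n n \<and> mat_adjoint A = A"

definition psd :: "nat \<Rightarrow> complex mat \<Rightarrow> bool" where
  "psd n A \<longleftrightarrow> hermitian n A \<and>
     (\<forall>v \<in> carrier_vec n. 0 \<le> Re ((A *\<^sub>v v) \<bullet>c v))"

definition pos_def :: "nat \<Rightarrow> complex mat \<Rightarrow> bool" where
  "pos_def n A \<longleftrightarrow> hermitian n A \<and>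
     (\<forall>v \<in> carrier_vec n. v \<noteq> 0\<^sub>v n \<longrightarrow> 0 < Re ((A *\<^sub>v v) \<bullet>c v))"

definition loewner_le :: "nat \<Rightarrow> complex mat \<Rightarrow> complex mat \<Rightarrow> bool" where
  "loewner_le n A B \<longleftrightarrow> A \<in> carrier_mat n n \<and> B \<in> carrier_mat n n \<and> psd n (B - A)"

definition rel_eigenvalues :: "complex mat \<Rightarrow> complex mat \<Rightarrow> complex multiset" where
  "rel_eigenvalues chi omega = proots (char_poly (the (mat_inverse chi) * omega))"

text \<open>omega \<in> Gamma_{chi,theta}: every sum of arccot over n-1 of the eigenvalues
  (i.e. omitting one eigenvalue, counted with multiplicity) is < theta.
  The eigenvalues are real; we take real parts.\<close>
definition in_Gamma :: "complex mat \<Rightarrow> real \<Rightarrow> complex mat \<Rightarrow> bool" where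
  "in_Gamma chi theta omega \<longleftrightarrow>
     (let M = rel_eigenvalues chi omega in
      \<forall>x \<in># M. sum_mset (image_mset (\<lambda>y. arccot (Re y)) (M - {#x#})) < theta)"

end

theory Submission
  imports Defs
begin

text \<open>Diagonalize \<open>\<omega>\<close> simultaneously with \<open>\<chi>\<^sub>0\<close> and with \<open>\<chi>\<close>, with relative eigenvalues
  \<open>\<lambda>\<^sub>1 \<ge> \<dots> \<ge> \<lambda>\<^sub>n\<close> and \<open>\<mu>\<^sub>1 \<ge> \<dots> \<ge> \<mu>\<^sub>n\<close>. Because \<open>\<chi>\<^sub>0 \<le> \<chi> \<le> (1 + \<epsilon>\<^sub>2) \<chi>\<^sub>0\<close>, the
  Courant--Fischer principle gives \<open>\<lambda>\<^sub>k \<le> max \<mu>\<^sub>k ((1 + \<epsilon>\<^sub>2) \<mu>\<^sub>k)\<close>, and the eigenvalues of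
  \<open>\<omega> + 2 \<epsilon>\<^sub>1 \<chi>\<close> relative to \<open>\<chi>\<close> are \<open>\<mu>\<^sub>k + 2 \<epsilon>\<^sub>1\<close>. What remains is an estimate for sums
  of at most \<open>n\<close> values of arccot. If every \<open>\<lambda>\<^sub>i\<close> is large, each term is small. Otherwise
  some \<open>\<lambda>\<^sub>i\<close> lies in a compact interval fixed by \<open>\<theta>\<close> and \<open>n\<close>, on which the shift by \<open>\<epsilon>\<^sub>1\<close>
  lowers arccot by a fixed amount; for \<open>\<epsilon>\<^sub>2\<close> small this outweighs the loss of at most
  \<open>\<epsilon>\<^sub>2\<close> per term caused by the multiplicative perturbation.\<close>

section \<open>Adjoints and congruence\<close>

lemma dim_mat_adjoint [simp]:
  "dim_row (mat_adjoint A) = dim_col A" "dim_col (mat_adjoint A) = dim_row A"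
  unfolding mat_adjoint_def by auto

lemma mat_adjoint_carrier [simp]: "A \<in> carrier_mat n m \<Longrightarrow> mat_adjoint A \<in> carrier_mat m n"
  unfolding carrier_mat_def by auto

lemma index_mat_adjoint [simp]:
  "i < dim_col A \<Longrightarrow> j < dim_row A \<Longrightarrow> mat_adjoint A $$ (i, j) = conjugate (A $$ (j, i))"
  unfolding mat_adjoint_def by (simp add: mat_of_rows_def)

lemma row_mat_adjoint: "i < dim_col A \<Longrightarrow> row (mat_adjoint A) i = conjugate (col A i)"
  by (rule eq_vecI) auto

lemma mat_adjoint_adjoint [simp]: "mat_adjoint (mat_adjoint A) = A"
  by (rule eq_matI) auto

lemma mat_adjoint_one [simp]: "mat_adjoint (1\<^sub>m n :: complex mat) = 1\<^sub>m n"
  by (rule eq_matI) auto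

lemma mat_adjoint_zero [simp]: "mat_adjoint (0\<^sub>m n m :: 'a :: conjugatable_field mat) = 0\<^sub>m m n"
  by (rule eq_matI) auto

lemma mat_adjoint_mult:
  assumes "A \<in> carrier_mat n m" "B \<in> carrier_mat m k"
  shows "mat_adjoint (A * B) = mat_adjoint B * mat_adjoint A"
proof (rule eq_matI)
  fix i j assume "i < dim_row (mat_adjoint B * mat_adjoint A)" "j < dim_col (mat_adjoint B * mat_adjoint A)"
  with assms show "mat_adjoint (A * B) $$ (i, j) = (mat_adjoint B * mat_adjoint A) $$ (i, j)"
    by (simp add: scalar_prod_def sum_conjugate conjugate_dist_mul mult.commute)
qed (use assms in auto)

lemma mat_adjoint_four_block_mat:
  assumes "A \<in> carrier_mat n1 m1" "B \<in> carrier_mat n1 m2" "C \<in> carrier_mat n2 m1" "D \<in> carrier_mat n2 m2"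
  shows "mat_adjoint (four_block_mat A B C D) =
    four_block_mat (mat_adjoint A) (mat_adjoint C) (mat_adjoint B) (mat_adjoint D)"
  by (rule eq_matI) (use assms in \<open>simp_all add: four_block_mat_def\<close>)

lemma cscalar_prod_mat_adjoint:
  fixes A :: "complex mat"
  assumes A: "A \<in> carrier_mat n m" and x: "x \<in> carrier_vec n" and y: "y \<in> carrier_vec m"
  shows "x \<bullet>c (A *\<^sub>v y) = (mat_adjoint A *\<^sub>v x) \<bullet>c y"
proof -
  have "x \<bullet>c (A *\<^sub>v y) = (\<Sum>i<n. \<Sum>j<m. x $ i * cnj (A $$ (i, j)) * cnj (y $ j))"
    using A x y by (simp add: scalar_prod_def cnj_sum sum_distrib_left mult.assoc lessThan_atLeast0)
  also have "\<dots> = (\<Sum>j<m. \<Sum>i<n. x $ i * cnj (A $$ (i, j)) * cnj (y $ j))"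
    by (rule sum.swap)
  also have "\<dots> = (mat_adjoint A *\<^sub>v x) \<bullet>c y"
    using A x y by (simp add: scalar_prod_def sum_distrib_left lessThan_atLeast0 ac_simps)
  finally show ?thesis .
qed

lemma quadratic_form_congruence:
  fixes P M :: "complex mat"
  assumes P: "P \<in> carrier_mat n k" and M: "M \<in> carrier_mat n n" and a: "a \<in> carrier_vec k"
  shows "(M *\<^sub>v (P *\<^sub>v a)) \<bullet>c (P *\<^sub>v a) = ((mat_adjoint P * M * P) *\<^sub>v a) \<bullet>c a"
proof -
  have "(M *\<^sub>v (P *\<^sub>v a)) \<bullet>c (P *\<^sub>v a) = (mat_adjoint P *\<^sub>v (M *\<^sub>v (P *\<^sub>v a))) \<bullet>c a"
    using cscalar_prod_mat_adjoint[OF P _ a] P M a by simp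
  also have "mat_adjoint P *\<^sub>v (M *\<^sub>v (P *\<^sub>v a)) = (mat_adjoint P * M) *\<^sub>v (P *\<^sub>v a)"
    by (rule assoc_mult_mat_vec[symmetric, of _ k n _ n]) (use P M a in auto)
  also have "\<dots> = (mat_adjoint P * M * P) *\<^sub>v a"
    by (rule assoc_mult_mat_vec[symmetric, of _ k n _ k]) (use P M a in auto)
  finally show ?thesis .
qed

lemma index_congruence:
  fixes P M :: "complex mat"
  assumes P: "P \<in> carrier_mat n k" and M: "M \<in> carrier_mat n n" and i: "i < k" and j: "j < k"
  shows "(mat_adjoint P * M * P) $$ (i, j) = (M *\<^sub>v col P j) \<bullet>c col P i"
proof -
  have "(mat_adjoint P * M * P) $$ (i, j) = col (mat_adjoint P * M * P) j $ i"
    using P M i j by simp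
  also have "col (mat_adjoint P * M * P) j = (mat_adjoint P * M) *\<^sub>v col P j"
    by (rule col_mult2[of _ k n _ k]) (use P M j in auto)
  also have "\<dots> = mat_adjoint P *\<^sub>v (M *\<^sub>v col P j)"
    by (rule assoc_mult_mat_vec[of _ k n _ n]) (use P M in auto)
  also have "(mat_adjoint P *\<^sub>v (M *\<^sub>v col P j)) $ i = conjugate (col P i) \<bullet> (M *\<^sub>v col P j)"
    using P i by (simp add: row_mat_adjoint)
  also have "\<dots> = (M *\<^sub>v col P j) \<bullet>c col P i"
    by (rule comm_scalar_prod[of _ n]) (use P M in auto)
  finally show ?thesis .
qed

lemma mat_adjoint_congruence_mult:
  fixes P Q M :: "complex mat"
  assumes P: "P \<in> carrier_mat n n" and Q: "Q \<in> carrier_mat n n" and M: "M \<in> carrier_mat n n"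
  shows "mat_adjoint (P * Q) * M * (P * Q) = mat_adjoint Q * (mat_adjoint P * M * P) * Q"
proof -
  have aP: "mat_adjoint P \<in> carrier_mat n n" and aQ: "mat_adjoint Q \<in> carrier_mat n n"
    and aPM: "mat_adjoint P * M \<in> carrier_mat n n"
    using P Q M by auto
  have "mat_adjoint (P * Q) * M * (P * Q) = mat_adjoint Q * (mat_adjoint P * M) * (P * Q)"
    using mat_adjoint_mult[OF P Q] assoc_mult_mat[OF aQ aP M] by simp
  also have "\<dots> = mat_adjoint Q * ((mat_adjoint P * M) * (P * Q))"
    by (rule assoc_mult_mat[of _ n n _ n _ n]) (use aQ aPM P Q in auto)
  also have "(mat_adjoint P * M) * (P * Q) = mat_adjoint P * M * P * Q"
    by (rule assoc_mult_mat[symmetric, of _ n n _ n _ n]) (use aPM P Q in auto)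
  also have "mat_adjoint Q * (mat_adjoint P * M * P * Q) = mat_adjoint Q * (mat_adjoint P * M * P) * Q"
    by (rule assoc_mult_mat[symmetric, of _ n n _ n _ n]) (use aQ aPM P Q in auto)
  finally show ?thesis .
qed

lemma hermitian_congruence:
  fixes P M :: "complex mat"
  assumes "hermitian n M" and P: "P \<in> carrier_mat n k"
  shows "hermitian k (mat_adjoint P * M * P)"
proof -
  have M: "M \<in> carrier_mat n n" and hM: "mat_adjoint M = M"
    using assms(1) by (auto simp: hermitian_def)
  have "mat_adjoint (mat_adjoint P * M * P) = mat_adjoint P * mat_adjoint (mat_adjoint P * M)"
    by (rule mat_adjoint_mult[of _ k n]) (use P M in auto)
  also have "mat_adjoint (mat_adjoint P * M) = M * P"
    using mat_adjoint_mult[of "mat_adjoint P" k n M n] P M hM by simp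
  also have "mat_adjoint P * (M * P) = mat_adjoint P * M * P"
    using P M by (simp add: assoc_mult_mat[of _ k n _ n _ k])
  finally show ?thesis
    unfolding hermitian_def using P M by auto
qed

section \<open>The spectral theorem for Hermitian matrices\<close>

definition unitary :: "nat \<Rightarrow> complex mat \<Rightarrow> bool" where
  "unitary n U \<longleftrightarrow> U \<in> carrier_mat n n \<and> mat_adjoint U * U = 1\<^sub>m n"

definition real_diag_mat :: "nat \<Rightarrow> (nat \<Rightarrow> real) \<Rightarrow> complex mat" where
  "real_diag_mat n d = mat n n (\<lambda>(i, j). if i = j then complex_of_real (d i) else 0)"

lemma real_diag_mat_carrier [simp]: "real_diag_mat n d \<in> carrier_mat n n"
  unfolding real_diag_mat_def by auto

lemma unitary_mult:
  assumes P: "unitary n P" and Q: "unitary n Q"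
  shows "unitary n (P * Q)"
proof -
  have Pc: "P \<in> carrier_mat n n" and Qc: "Q \<in> carrier_mat n n"
    using P Q by (auto simp: unitary_def)
  have "mat_adjoint (P * Q) * (P * Q) = mat_adjoint (P * Q) * 1\<^sub>m n * (P * Q)"
    using Pc Qc by simp
  also have "\<dots> = 1\<^sub>m n"
    using mat_adjoint_congruence_mult[OF Pc Qc one_carrier_mat] P Q Pc Qc
    by (simp add: unitary_def)
  finally show ?thesis
    unfolding unitary_def using Pc Qc by auto
qed

lemma cscalar_prod_normalize:
  fixes w :: "complex vec"
  assumes w: "w \<in> carrier_vec n" and w0: "w \<noteq> 0\<^sub>v n"
  defines "c \<equiv> complex_of_real (1 / sqrt (Re (w \<bullet>c w)))"
  shows "(c \<cdot>\<^sub>v w) \<bullet>c (c \<cdot>\<^sub>v w) = 1"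
proof -
  define r where "r = Re (w \<bullet>c w)"
  have "w \<bullet>c w > 0"
    using w w0 by simp
  then have r: "w \<bullet>c w = complex_of_real r" "0 < r"
    unfolding r_def by (auto simp: less_complex_def complex_eq_iff)
  have "(c \<cdot>\<^sub>v w) \<bullet>c (c \<cdot>\<^sub>v w) = c * cnj c * (w \<bullet>c w)"
    using w by (simp add: conjugate_smult_vec)
  also have "\<dots> = complex_of_real (1 / sqrt r * (1 / sqrt r) * r)"
    unfolding c_def r(1) by (simp only: complex_cnj_complex_of_real of_real_mult Re_complex_of_real)
  also have "1 / sqrt r * (1 / sqrt r) * r = 1"
    using r(2) by (simp add: field_simps)
  finally show ?thesis by simp
qed

lemma unitary_normalized_cols:
  assumes ws: "set ws \<subseteq> carrier_vec n" "corthogonal ws" "length ws = n"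
  defines "us \<equiv> map (\<lambda>w. complex_of_real (1 / sqrt (Re (w \<bullet>c w))) \<cdot>\<^sub>v w) ws"
  shows "unitary n (mat_of_cols n us)"
proof -
  have wsi: "ws ! i \<in> carrier_vec n" if "i < n" for i
    using ws that by auto
  have wsnz: "ws ! i \<noteq> 0\<^sub>v n" if i: "i < n" for i
    using corthogonalD[OF ws(2), of i i] i ws(3) wsi[OF i] by auto
  have us: "set us \<subseteq> carrier_vec n" "length us = n"
    unfolding us_def using ws by auto
  have orthonormal: "us ! j \<bullet>c us ! i = (if i = j then 1 else 0)" if i: "i < n" and j: "j < n" for i j
  proof (cases "i = j")
    case True
    then show ?thesis
      using cscalar_prod_normalize[OF wsi[OF i] wsnz[OF i]] i ws(3) unfolding us_def by simp
  next
    case False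
    have "ws ! j \<bullet>c ws ! i = 0"
      using corthogonalD[OF ws(2), of j i] i j ws(3) False by auto
    then show ?thesis
      using False i j ws(3) wsi[OF i] wsi[OF j] unfolding us_def by (simp add: conjugate_smult_vec)
  qed
  have "mat_adjoint (mat_of_cols n us) * mat_of_cols n us = 1\<^sub>m n"
  proof (rule eq_matI)
    fix i j assume "i < dim_row (1\<^sub>m n :: complex mat)" "j < dim_col (1\<^sub>m n :: complex mat)"
    then have i: "i < n" and j: "j < n" by auto
    have "(mat_adjoint (mat_of_cols n us) * mat_of_cols n us) $$ (i, j) = conjugate (us ! i) \<bullet> us ! j"
      using i j us col_mat_of_cols[of _ us n] by (simp add: row_mat_adjoint subsetD)
    also have "\<dots> = us ! j \<bullet>c us ! i"
      by (rule comm_scalar_prod[of _ n]) (use us i j in \<open>auto intro!: carrier_vec_conjugate\<close>)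
    finally show "(mat_adjoint (mat_of_cols n us) * mat_of_cols n us) $$ (i, j) = 1\<^sub>m n $$ (i, j)"
      using orthonormal[OF i j] i j by simp
  qed (use us in auto)
  then show ?thesis
    unfolding unitary_def using us by auto
qed

lemma unitary_with_first_col:
  assumes v: "v \<in> carrier_vec n" and v0: "v \<noteq> 0\<^sub>v n"
  obtains W c where "unitary n W" and "col W 0 = c \<cdot>\<^sub>v v"
proof -
  interpret cof_vec_space n "TYPE(complex)" .
  define b where "b = basis_completion v"
  define ws where "ws = gram_schmidt n b"
  from basis_completion[OF v v0, folded b_def]
  have b: "distinct b" "\<not> lin_dep (set b)" "set b \<subseteq> carrier_vec n" "hd b = v" "length b = n"
    by auto
  have n: "0 < n" using v v0 by (cases n) auto
  then obtain vs where b_Cons: "b = v # vs" using b(4,5) by (cases b) auto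
  from gram_schmidt_result[OF b(3,1,2) refl, folded ws_def]
  have ws: "set ws \<subseteq> carrier_vec n" "corthogonal ws" "length ws = n"
    by (auto simp: b(5))
  have "hd ws = v"
    using gram_schmidt_hd[OF v, of vs] unfolding ws_def b_Cons .
  then have ws0: "ws ! 0 = v"
    using ws(3) n by (cases ws) auto
  define c where "c = complex_of_real (1 / sqrt (Re (v \<bullet>c v)))"
  let ?W = "mat_of_cols n (map (\<lambda>w. complex_of_real (1 / sqrt (Re (w \<bullet>c w))) \<cdot>\<^sub>v w) ws)"
  have "col ?W 0 = map (\<lambda>w. complex_of_real (1 / sqrt (Re (w \<bullet>c w))) \<cdot>\<^sub>v w) ws ! 0"
    by (rule col_mat_of_cols) (use ws n in auto)
  then have "col ?W 0 = c \<cdot>\<^sub>v v"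
    using ws(3) n ws0 unfolding c_def by simp
  with unitary_normalized_cols[OF ws] show thesis
    using that by blast
qed

lemma col0_congruence_eigenvector:
  fixes A :: "complex mat"
  assumes W: "unitary n W" and n: "0 < n" and A: "A \<in> carrier_mat n n"
    and eigen: "A *\<^sub>v col W 0 = e \<cdot>\<^sub>v col W 0"
  shows "col (mat_adjoint W * A * W) 0 = e \<cdot>\<^sub>v unit_vec n 0"
proof -
  have Wc: "W \<in> carrier_mat n n" and WW: "mat_adjoint W * W = 1\<^sub>m n"
    using W by (auto simp: unitary_def)
  have "col (mat_adjoint W * A * W) 0 = (mat_adjoint W * A) *\<^sub>v col W 0"
    by (rule col_mult2[of _ n n _ n]) (use Wc A n in auto)
  also have "\<dots> = mat_adjoint W *\<^sub>v (A *\<^sub>v col W 0)"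
    by (rule assoc_mult_mat_vec[of _ n n _ n]) (use Wc A in auto)
  also have "\<dots> = e \<cdot>\<^sub>v (mat_adjoint W *\<^sub>v col W 0)"
    unfolding eigen by (rule mult_mat_vec[of _ n n]) (use Wc in auto)
  also have "mat_adjoint W *\<^sub>v col W 0 = col (mat_adjoint W * W) 0"
    using Wc n by (simp add: col_mult2[of _ n n _ n])
  finally show ?thesis
    using WW n by simp
qed

lemma hermitian_deflate:
  fixes B :: "complex mat"
  assumes B: "hermitian (Suc m) B" and col0: "col B 0 = e \<cdot>\<^sub>v unit_vec (Suc m) 0"
  obtains r B' where "hermitian m B'"
    and "B = four_block_mat (mat 1 1 (\<lambda>_. complex_of_real r)) (0\<^sub>m 1 m) (0\<^sub>m m 1) B'"
proof -
  have Bc: "B \<in> carrier_mat (Suc m) (Suc m)" and hB: "mat_adjoint B = B"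
    using B by (auto simp: hermitian_def)
  have Bi0: "B $$ (i, 0) = (if i = 0 then e else 0)" if "i < Suc m" for i
    using arg_cong[OF col0, of "\<lambda>x. x $ i"] Bc that by simp
  have B0j: "B $$ (0, j) = cnj (B $$ (j, 0))" if "j < Suc m" for j
    using arg_cong[OF hB, of "\<lambda>M. M $$ (0, j)"] Bc that by simp
  have e_real: "e = complex_of_real (Re e)"
    using B0j[of 0] Bi0[of 0] by (simp add: complex_eq_iff)
  define B' where "B' = mat m m (\<lambda>(i, j). B $$ (Suc i, Suc j))"
  have "hermitian m B'"
    unfolding hermitian_def
  proof
    show "mat_adjoint B' = B'"
    proof (rule eq_matI)
      fix i j assume "i < dim_row B'" "j < dim_col B'"
      then have i: "i < m" and j: "j < m" unfolding B'_def by auto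
      show "mat_adjoint B' $$ (i, j) = B' $$ (i, j)"
        using arg_cong[OF hB, of "\<lambda>M. M $$ (Suc i, Suc j)"] Bc i j unfolding B'_def by simp
    qed (auto simp: B'_def)
  qed (simp add: B'_def)
  moreover have "B = four_block_mat (mat 1 1 (\<lambda>_. complex_of_real (Re e))) (0\<^sub>m 1 m) (0\<^sub>m m 1) B'"
  proof (rule eq_matI)
    fix i j assume "i < dim_row (four_block_mat (mat 1 1 (\<lambda>_. complex_of_real (Re e))) (0\<^sub>m 1 m) (0\<^sub>m m 1) B')"
      "j < dim_col (four_block_mat (mat 1 1 (\<lambda>_. complex_of_real (Re e))) (0\<^sub>m 1 m) (0\<^sub>m m 1) B')"
    then have i: "i < Suc m" and j: "j < Suc m" unfolding B'_def by auto
    show "B $$ (i, j) = four_block_mat (mat 1 1 (\<lambda>_. complex_of_real (Re e))) (0\<^sub>m 1 m) (0\<^sub>m m 1) B' $$ (i, j)"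
      using i j Bi0[OF i] Bi0[OF j] B0j[OF j] e_real unfolding B'_def
      by (cases i; cases j) auto
  qed (use Bc in \<open>auto simp: B'_def\<close>)
  ultimately show thesis
    using that by blast
qed

lemma unitary_four_block_one:
  assumes "unitary m U"
  shows "unitary (Suc m) (four_block_mat (1\<^sub>m 1) (0\<^sub>m 1 m) (0\<^sub>m m 1) U)"
  using assms
  by (auto simp: unitary_def mat_adjoint_four_block_mat[of _ 1 1 _ m _ m]
      mult_four_block_mat[of _ 1 1 _ m _ m _ _ 1 _ m])

lemma congruence_four_block_one:
  fixes U B a :: "complex mat"
  assumes U: "U \<in> carrier_mat m m" and B: "B \<in> carrier_mat m m" and a: "a \<in> carrier_mat 1 1"
  defines "U1 \<equiv> four_block_mat (1\<^sub>m 1) (0\<^sub>m 1 m) (0\<^sub>m m 1) U"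
  shows "mat_adjoint U1 * four_block_mat a (0\<^sub>m 1 m) (0\<^sub>m m 1) B * U1 =
    four_block_mat a (0\<^sub>m 1 m) (0\<^sub>m m 1) (mat_adjoint U * B * U)"
proof -
  have "mat_adjoint U * B \<in> carrier_mat m m"
    using U B by (meson mat_adjoint_carrier mult_carrier_mat)
  then show ?thesis
    unfolding U1_def using U B a
    by (simp add: mat_adjoint_four_block_mat[of _ 1 1 _ m _ m]
        mult_four_block_mat[of _ 1 1 _ m _ m _ _ 1 _ m])
qed

lemma real_diag_mat_Suc:
  "real_diag_mat (Suc m) d =
    four_block_mat (mat 1 1 (\<lambda>_. complex_of_real (d 0))) (0\<^sub>m 1 m) (0\<^sub>m m 1) (real_diag_mat m (\<lambda>i. d (Suc i)))"
  by (rule eq_matI) (auto simp: real_diag_mat_def less_Suc_eq_0_disj)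

lemma eigenvector_exists:
  fixes A :: "complex mat"
  assumes A: "A \<in> carrier_mat n n" and n: "0 < n"
  obtains e v where "v \<in> carrier_vec n" and "v \<noteq> 0\<^sub>v n" and "A *\<^sub>v v = e \<cdot>\<^sub>v v"
proof -
  obtain es where "char_poly A = (\<Prod>a\<leftarrow>es. [:- a, 1:])" and "length es = n"
    using char_poly_factorized[OF A] by auto
  then obtain e where "eigenvalue A e"
    using n unfolding eigenvalue_root_char_poly[OF A] by (cases es) auto
  then have "eigenvector A (find_eigenvector A e) e"
    by (rule find_eigenvector[OF A])
  with A that show thesis
    unfolding eigenvector_def by auto
qed

theorem hermitian_spectral:
  "hermitian n A \<Longrightarrow> \<exists>U d. unitary n U \<and> mat_adjoint U * A * U = real_diag_mat n d"
proof (induction n arbitrary: A)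
  case 0
  then show ?case
    by (intro exI[of _ "1\<^sub>m 0"]) (auto intro!: eq_matI simp: hermitian_def unitary_def real_diag_mat_def)
next
  case (Suc m)
  have A: "A \<in> carrier_mat (Suc m) (Suc m)"
    using Suc.prems by (simp add: hermitian_def)
  obtain e v where v: "v \<in> carrier_vec (Suc m)" "v \<noteq> 0\<^sub>v (Suc m)" and Av: "A *\<^sub>v v = e \<cdot>\<^sub>v v"
    using eigenvector_exists[OF A] by blast
  obtain W c where W: "unitary (Suc m) W" and cW: "col W 0 = c \<cdot>\<^sub>v v"
    using unitary_with_first_col[OF v] by blast
  have Wc: "W \<in> carrier_mat (Suc m) (Suc m)"
    using W by (simp add: unitary_def)
  have "A *\<^sub>v col W 0 = e \<cdot>\<^sub>v col W 0"
    unfolding cW using A v Av by (simp add: mult_mat_vec[of _ "Suc m" "Suc m"] smult_smult_assoc mult.commute)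
  then have "col (mat_adjoint W * A * W) 0 = e \<cdot>\<^sub>v unit_vec (Suc m) 0"
    using col0_congruence_eigenvector[OF W _ A] by simp
  then obtain r B' where B': "hermitian m B'"
    and B: "mat_adjoint W * A * W = four_block_mat (mat 1 1 (\<lambda>_. complex_of_real r)) (0\<^sub>m 1 m) (0\<^sub>m m 1) B'"
    using hermitian_deflate hermitian_congruence[OF Suc.prems Wc] by metis
  obtain U' d' where U': "unitary m U'" and D': "mat_adjoint U' * B' * U' = real_diag_mat m d'"
    using Suc.IH[OF B'] by blast
  define U1 where "U1 = four_block_mat (1\<^sub>m 1) (0\<^sub>m 1 m) (0\<^sub>m m 1) U'"
  have U1: "unitary (Suc m) U1"
    unfolding U1_def by (rule unitary_four_block_one[OF U'])
  have "mat_adjoint (W * U1) * A * (W * U1) = mat_adjoint U1 * (mat_adjoint W * A * W) * U1"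
    using Wc U1 A by (simp add: unitary_def mat_adjoint_congruence_mult)
  also have "\<dots> = four_block_mat (mat 1 1 (\<lambda>_. complex_of_real r)) (0\<^sub>m 1 m) (0\<^sub>m m 1) (real_diag_mat m d')"
    unfolding B U1_def D'[symmetric]
    by (rule congruence_four_block_one) (use U' B' in \<open>auto simp: unitary_def hermitian_def\<close>)
  also have "\<dots> = real_diag_mat (Suc m) (case_nat r d')"
    by (simp add: real_diag_mat_Suc)
  finally show ?case
    using unitary_mult[OF W U1] by blast
qed

section \<open>Simultaneous diagonalization and relative eigenvalues\<close>

lemma real_diag_mat_mult: "real_diag_mat n a * real_diag_mat n b = real_diag_mat n (\<lambda>i. a i * b i)"
proof (rule eq_matI)
  fix i j assume "i < dim_row (real_diag_mat n (\<lambda>i. a i * b i))" "j < dim_col (real_diag_mat n (\<lambda>i. a i * b i))"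
  then have i: "i < n" and j: "j < n" by (auto simp: real_diag_mat_def)
  have "(real_diag_mat n a * real_diag_mat n b) $$ (i, j) =
      (\<Sum>k = 0..<n. real_diag_mat n a $$ (i, k) * real_diag_mat n b $$ (k, j))"
    using i j by (simp add: real_diag_mat_def scalar_prod_def)
  also have "\<dots> = (\<Sum>k = 0..<n. if k = i then complex_of_real (a i) * real_diag_mat n b $$ (i, j) else 0)"
    by (rule sum.cong) (use i j in \<open>auto simp: real_diag_mat_def\<close>)
  finally show "(real_diag_mat n a * real_diag_mat n b) $$ (i, j) = real_diag_mat n (\<lambda>i. a i * b i) $$ (i, j)"
    using i j by (simp add: real_diag_mat_def)
qed (auto simp: real_diag_mat_def)

lemma mat_adjoint_real_diag_mat [simp]: "mat_adjoint (real_diag_mat n d) = real_diag_mat n d"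
  by (rule eq_matI) (auto simp: real_diag_mat_def)

lemma real_diag_mat_one: "(\<And>i. i < n \<Longrightarrow> d i = 1) \<Longrightarrow> real_diag_mat n d = 1\<^sub>m n"
  by (rule eq_matI) (auto simp: real_diag_mat_def)

lemma pos_def_congruence_one:
  assumes pd: "pos_def n \<chi>"
  obtains S where "S \<in> carrier_mat n n" and "mat_adjoint S * \<chi> * S = 1\<^sub>m n"
proof -
  have hermitian: "hermitian n \<chi>" and C: "\<chi> \<in> carrier_mat n n"
    using pd by (auto simp: pos_def_def hermitian_def)
  obtain U d where U: "unitary n U" and D: "mat_adjoint U * \<chi> * U = real_diag_mat n d"
    using hermitian_spectral[OF hermitian] by blast
  have Uc: "U \<in> carrier_mat n n"
    using U by (simp add: unitary_def)
  have d_pos: "0 < d i" if i: "i < n" for i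
  proof -
    have "1 = (mat_adjoint U * 1\<^sub>m n * U) $$ (i, i)"
      using U Uc i by (simp add: unitary_def)
    also have "\<dots> = (1\<^sub>m n *\<^sub>v col U i) \<bullet>c col U i"
      by (rule index_congruence[OF Uc one_carrier_mat i i])
    finally have "col U i \<noteq> 0\<^sub>v n"
      using Uc i by auto
    then have "0 < Re ((\<chi> *\<^sub>v col U i) \<bullet>c col U i)"
      using pd Uc i unfolding pos_def_def by auto
    also have "(\<chi> *\<^sub>v col U i) \<bullet>c col U i = complex_of_real (d i)"
      using index_congruence[OF Uc C i i] D i by (simp add: real_diag_mat_def)
    finally show ?thesis by simp
  qed
  define S where "S = U * real_diag_mat n (\<lambda>i. 1 / sqrt (d i))"
  have "mat_adjoint S * \<chi> * S =
      real_diag_mat n (\<lambda>i. 1 / sqrt (d i)) * real_diag_mat n d * real_diag_mat n (\<lambda>i. 1 / sqrt (d i))"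
    unfolding S_def mat_adjoint_congruence_mult[OF Uc real_diag_mat_carrier C] D by simp
  also have "\<dots> = 1\<^sub>m n"
    unfolding real_diag_mat_mult using d_pos by (intro real_diag_mat_one) (force simp: field_simps)
  finally have "mat_adjoint S * \<chi> * S = 1\<^sub>m n" .
  moreover have "S \<in> carrier_mat n n"
    unfolding S_def by (rule mult_carrier_mat[OF Uc real_diag_mat_carrier])
  ultimately show thesis
    using that by blast
qed

text \<open>The columns of \<open>V\<close> form a \<open>\<chi>\<close>-orthonormal basis of eigenvectors of \<open>\<chi>\<^sup>-\<^sup>1\<omega>\<close>
  with eigenvalues \<open>\<mu>\<close>.\<close>

definition rel_diagonalizes :: "nat \<Rightarrow> complex mat \<Rightarrow> complex mat \<Rightarrow> complex mat \<Rightarrow> (nat \<Rightarrow> real) \<Rightarrow> bool" where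
  "rel_diagonalizes n \<chi> \<omega> V \<mu> \<longleftrightarrow> V \<in> carrier_mat n n \<and>
     mat_adjoint V * \<chi> * V = 1\<^sub>m n \<and> mat_adjoint V * \<omega> * V = real_diag_mat n \<mu>"

lemma congruence_perm_mat:
  fixes N :: "complex mat"
  assumes N: "N \<in> carrier_mat n n" and \<pi>: "\<And>i. i < n \<Longrightarrow> \<pi> i < n"
  defines "P \<equiv> mat n n (\<lambda>(r, c). if r = \<pi> c then 1 else 0)"
  shows "mat_adjoint P * N * P = mat n n (\<lambda>(i, j). N $$ (\<pi> i, \<pi> j))"
proof (rule eq_matI)
  fix i j assume "i < dim_row (mat n n (\<lambda>(i, j). N $$ (\<pi> i, \<pi> j)))" "j < dim_col (mat n n (\<lambda>(i, j). N $$ (\<pi> i, \<pi> j)))"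
  then have i: "i < n" and j: "j < n" by auto
  have col_P: "col P c = unit_vec n (\<pi> c)" if "c < n" for c
    by (rule eq_vecI) (use that in \<open>auto simp: P_def unit_vec_def\<close>)
  have N_unit: "N *\<^sub>v unit_vec n (\<pi> j) = col N (\<pi> j)"
    by (rule eq_vecI) (use N \<pi>[OF j] in \<open>auto simp: scalar_prod_right_unit\<close>)
  have conj_unit: "conjugate (unit_vec n (\<pi> i)) = (unit_vec n (\<pi> i) :: complex vec)"
    by (rule eq_vecI) (auto simp: unit_vec_def)
  have "(mat_adjoint P * N * P) $$ (i, j) = (N *\<^sub>v unit_vec n (\<pi> j)) \<bullet>c unit_vec n (\<pi> i)"
    using index_congruence[OF _ N i j, of P] i j col_P by (simp add: P_def)
  also have "\<dots> = N $$ (\<pi> i, \<pi> j)"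
    unfolding N_unit conj_unit using N \<pi>[OF i] \<pi>[OF j] by (simp add: scalar_prod_right_unit)
  finally show "(mat_adjoint P * N * P) $$ (i, j) = mat n n (\<lambda>(i, j). N $$ (\<pi> i, \<pi> j)) $$ (i, j)"
    using i j by simp
qed (auto simp: P_def)

lemma rel_diagonalizes_sorted:
  assumes V: "rel_diagonalizes n \<chi> \<omega> V \<mu>" and C: "\<chi> \<in> carrier_mat n n" and O: "\<omega> \<in> carrier_mat n n"
  obtains V' \<mu>' where "rel_diagonalizes n \<chi> \<omega> V' \<mu>'" and "antimono_on {..<n} \<mu>'"
proof -
  define xs where "xs = sort_key (\<lambda>i. - \<mu> i) [0..<n]"
  have xs: "length xs = n" "distinct xs" "set xs = {..<n}" "sorted (map (\<lambda>i. - \<mu> i) xs)"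
    unfolding xs_def by auto
  have \<pi>_lt: "xs ! i < n" if "i < n" for i
    using nth_mem[of i xs] xs(1,3) that by auto
  have \<pi>_eq: "xs ! i = xs ! j \<longleftrightarrow> i = j" if "i < n" "j < n" for i j
    using nth_eq_iff_index_eq[OF xs(2)] xs(1) that by simp
  define P :: "complex mat" where "P = mat n n (\<lambda>(r, c). if r = xs ! c then 1 else 0)"
  have P: "P \<in> carrier_mat n n"
    unfolding P_def by simp
  have Vc: "V \<in> carrier_mat n n" and VCV: "mat_adjoint V * \<chi> * V = 1\<^sub>m n"
    and VOV: "mat_adjoint V * \<omega> * V = real_diag_mat n \<mu>"
    using V by (auto simp: rel_diagonalizes_def)
  have "mat_adjoint P * 1\<^sub>m n * P = 1\<^sub>m n"
    unfolding P_def using \<pi>_lt \<pi>_eq by (subst congruence_perm_mat) (auto intro!: eq_matI)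
  moreover have "mat_adjoint P * real_diag_mat n \<mu> * P = real_diag_mat n (\<lambda>i. \<mu> (xs ! i))"
    unfolding P_def using \<pi>_lt \<pi>_eq
    by (subst congruence_perm_mat) (auto intro!: eq_matI simp: real_diag_mat_def)
  ultimately have "rel_diagonalizes n \<chi> \<omega> (V * P) (\<lambda>i. \<mu> (xs ! i))"
    unfolding rel_diagonalizes_def mat_adjoint_congruence_mult[OF Vc P C]
      mat_adjoint_congruence_mult[OF Vc P O] VCV VOV using Vc P by simp
  moreover have "antimono_on {..<n} (\<lambda>i. \<mu> (xs ! i))"
    using sorted_nth_mono[OF xs(4)] xs(1) by (intro monotone_onI) auto
  ultimately show thesis
    using that by blast
qed

lemma rel_diagonalizes_exists:
  assumes pd: "pos_def n \<chi>" and \<omega>: "hermitian n \<omega>"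
  obtains V \<mu> where "rel_diagonalizes n \<chi> \<omega> V \<mu>" and "antimono_on {..<n} \<mu>"
proof -
  have C: "\<chi> \<in> carrier_mat n n" and O: "\<omega> \<in> carrier_mat n n"
    using pd \<omega> by (auto simp: pos_def_def hermitian_def)
  obtain S where S: "S \<in> carrier_mat n n" and SCS: "mat_adjoint S * \<chi> * S = 1\<^sub>m n"
    using pos_def_congruence_one[OF pd] by blast
  obtain U \<mu> where U: "unitary n U" and D: "mat_adjoint U * (mat_adjoint S * \<omega> * S) * U = real_diag_mat n \<mu>"
    using hermitian_spectral[OF hermitian_congruence[OF \<omega> S]] by blast
  have Uc: "U \<in> carrier_mat n n"
    using U by (simp add: unitary_def)
  have "rel_diagonalizes n \<chi> \<omega> (S * U) \<mu>"
    unfolding rel_diagonalizes_def mat_adjoint_congruence_mult[OF S Uc C] mat_adjoint_congruence_mult[OF S Uc O]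
    using S Uc U SCS D by (simp add: unitary_def)
  then show thesis
    using rel_diagonalizes_sorted C O that by metis
qed

lemma rel_diagonalizes_add_smult:
  assumes V: "rel_diagonalizes n \<chi> \<omega> V \<mu>" and C: "\<chi> \<in> carrier_mat n n" and O: "\<omega> \<in> carrier_mat n n"
  shows "rel_diagonalizes n \<chi> (\<omega> + complex_of_real c \<cdot>\<^sub>m \<chi>) V (\<lambda>i. \<mu> i + c)"
proof -
  have Vc: "V \<in> carrier_mat n n" and aV: "mat_adjoint V \<in> carrier_mat n n"
    using V by (auto simp: rel_diagonalizes_def)
  have VO: "mat_adjoint V * \<omega> \<in> carrier_mat n n" and VC: "mat_adjoint V * \<chi> \<in> carrier_mat n n"
    using aV C O by auto
  have "mat_adjoint V * (\<omega> + complex_of_real c \<cdot>\<^sub>m \<chi>) =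
      mat_adjoint V * \<omega> + complex_of_real c \<cdot>\<^sub>m (mat_adjoint V * \<chi>)"
    using aV C O by (simp add: mult_add_distrib_mat[of _ n n] mult_smult_distrib[of _ n n])
  then have "mat_adjoint V * (\<omega> + complex_of_real c \<cdot>\<^sub>m \<chi>) * V =
      mat_adjoint V * \<omega> * V + complex_of_real c \<cdot>\<^sub>m (mat_adjoint V * \<chi> * V)"
    using VO VC Vc by (simp add: add_mult_distrib_mat[of _ n n] mult_smult_assoc_mat[of _ n n])
  also have "\<dots> = real_diag_mat n (\<lambda>i. \<mu> i + c)"
    using V by (auto intro!: eq_matI simp: rel_diagonalizes_def real_diag_mat_def)
  finally show ?thesis
    using V by (simp add: rel_diagonalizes_def)
qed

lemma the_mat_inverse_eqI:
  fixes A X :: "'a :: field mat"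
  assumes A: "A \<in> carrier_mat n n" and X: "X \<in> carrier_mat n n" and XA: "X * A = 1\<^sub>m n"
  shows "the (mat_inverse A) = X"
proof -
  have AX: "A * X = 1\<^sub>m n"
    by (rule mat_mult_left_right_inverse[OF X A XA])
  show ?thesis
  proof (cases "mat_inverse A")
    case None
    have "A \<in> Units (ring_mat TYPE('a) n undefined)"
      unfolding Units_def ring_mat_def using A X XA AX by auto
    then show ?thesis
      using mat_inverse(1)[OF A None, of undefined] by blast
  next
    case (Some Y)
    then have YA: "Y * A = 1\<^sub>m n" and Y: "Y \<in> carrier_mat n n"
      using mat_inverse(2)[OF A] by auto
    have "Y = Y * (A * X)" using AX Y by simp
    also have "\<dots> = X" using Y A X YA by (simp add: assoc_mult_mat[symmetric, of _ n n _ n _ n])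
    finally show ?thesis using Some by simp
  qed
qed

lemma proots_prod_linear_factors: "proots (\<Prod>a\<leftarrow>as. [:- a, 1:]) = mset (as :: 'a :: idom list)"
proof (induction as)
  case (Cons a as)
  have "(\<Prod>a\<leftarrow>as. [:- a, 1:]) \<noteq> (0 :: 'a poly)"
    by (auto simp: prod_list_zero_iff)
  then have "proots ([:- a, 1:] * (\<Prod>x\<leftarrow>as. [:- x, 1:])) = proots [:- a, 1:] + proots (\<Prod>x\<leftarrow>as. [:- x, 1:])"
    by (intro proots_mult) auto
  also have "proots [:- a, 1:] = {#a#}"
    using proots_linear_factor[of "- a"] by simp
  finally show ?case
    using Cons by simp
qed simp

lemma rel_diagonalizes_mat_inverse:
  assumes V: "rel_diagonalizes n \<chi> \<omega> V \<mu>" and C: "\<chi> \<in> carrier_mat n n"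
  shows "V * (mat_adjoint V * \<chi>) = 1\<^sub>m n" and "the (mat_inverse \<chi>) = V * mat_adjoint V"
proof -
  have Vc: "V \<in> carrier_mat n n" and VCV: "mat_adjoint V * \<chi> * V = 1\<^sub>m n"
    using V by (auto simp: rel_diagonalizes_def)
  have aV: "mat_adjoint V \<in> carrier_mat n n" and aVC: "mat_adjoint V * \<chi> \<in> carrier_mat n n"
    using Vc C by auto
  show V_aVC: "V * (mat_adjoint V * \<chi>) = 1\<^sub>m n"
    by (rule mat_mult_left_right_inverse[OF aVC Vc VCV])
  have "V * mat_adjoint V * \<chi> = 1\<^sub>m n"
    using assoc_mult_mat[OF Vc aV C] V_aVC by simp
  then show "the (mat_inverse \<chi>) = V * mat_adjoint V"
    by (rule the_mat_inverse_eqI[OF C mult_carrier_mat[OF Vc aV]])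
qed

lemma rel_diagonalizes_similar_mat:
  assumes V: "rel_diagonalizes n \<chi> \<omega> V \<mu>" and C: "\<chi> \<in> carrier_mat n n" and O: "\<omega> \<in> carrier_mat n n"
  shows "similar_mat (V * mat_adjoint V * \<omega>) (real_diag_mat n \<mu>)"
proof -
  have Vc: "V \<in> carrier_mat n n" and VCV: "mat_adjoint V * \<chi> * V = 1\<^sub>m n"
    and VOV: "mat_adjoint V * \<omega> * V = real_diag_mat n \<mu>"
    using V by (auto simp: rel_diagonalizes_def)
  have aV: "mat_adjoint V \<in> carrier_mat n n" and aVC: "mat_adjoint V * \<chi> \<in> carrier_mat n n"
    and aVO: "mat_adjoint V * \<omega> \<in> carrier_mat n n" and VVO: "V * mat_adjoint V * \<omega> \<in> carrier_mat n n"
    using Vc C O by auto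
  note V_aVC = rel_diagonalizes_mat_inverse(1)[OF V C]
  have "V * real_diag_mat n \<mu> * (mat_adjoint V * \<chi>) = V * (mat_adjoint V * \<omega> * (V * (mat_adjoint V * \<chi>)))"
    unfolding VOV[symmetric] using Vc aVO aVC by (simp add: assoc_mult_mat[of _ n n _ n _ n])
  also have "\<dots> = V * mat_adjoint V * \<omega>"
    unfolding V_aVC using Vc aV O aVO by (simp add: assoc_mult_mat[of _ n n _ n _ n])
  finally have "similar_mat_wit (V * mat_adjoint V * \<omega>) (real_diag_mat n \<mu>) V (mat_adjoint V * \<chi>)"
    unfolding similar_mat_wit_def Let_def using VVO Vc aVC V_aVC VCV by auto
  then show ?thesis
    unfolding similar_mat_def by blast
qed

lemma char_poly_real_diag_mat:
  "char_poly (real_diag_mat n \<mu>) = (\<Prod>a\<leftarrow>map (\<lambda>i. complex_of_real (\<mu> i)) [0..<n]. [:- a, 1:])"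
proof -
  have "diag_mat (real_diag_mat n \<mu>) = map (\<lambda>i. complex_of_real (\<mu> i)) [0..<n]"
    unfolding diag_mat_def real_diag_mat_def by simp
  moreover have "upper_triangular (real_diag_mat n \<mu>)"
    unfolding upper_triangular_def real_diag_mat_def by auto
  ultimately show ?thesis
    using char_poly_upper_triangular[OF real_diag_mat_carrier] by simp
qed

lemma rel_eigenvalues_rel_diagonalizes:
  assumes V: "rel_diagonalizes n \<chi> \<omega> V \<mu>" and C: "\<chi> \<in> carrier_mat n n" and O: "\<omega> \<in> carrier_mat n n"
  shows "rel_eigenvalues \<chi> \<omega> = mset (map (\<lambda>i. complex_of_real (\<mu> i)) [0..<n])"
  unfolding rel_eigenvalues_def rel_diagonalizes_mat_inverse(2)[OF V C]
    char_poly_similar[OF rel_diagonalizes_similar_mat[OF V C O]] char_poly_real_diag_mat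
  by (rule proots_prod_linear_factors)

lemma in_Gamma_iff:
  assumes "rel_eigenvalues \<chi> \<omega> = mset (map (\<lambda>i. complex_of_real (g i)) [0..<n])"
  shows "in_Gamma \<chi> \<theta> \<omega> \<longleftrightarrow> (\<forall>j<n. (\<Sum>i\<in>{..<n} - {j}. arccot (g i)) < \<theta>)"
proof -
  define M where "M = mset (map (\<lambda>i. complex_of_real (g i)) [0..<n])"
  define h where "h = (\<lambda>y. arccot (Re y))"
  have sum_M: "sum_mset (image_mset h M) = (\<Sum>i<n. arccot (g i))"
    unfolding M_def h_def by (simp add: multiset.map_comp comp_def sum_unfold_sum_mset atLeast0LessThan)
  have sum_remove: "sum_mset (image_mset h (M - {#x#})) = sum_mset (image_mset h M) - h x" if "x \<in># M" for x
  proof -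
    have "M = add_mset x (M - {#x#})"
      using that by simp
    then have "sum_mset (image_mset h M) = h x + sum_mset (image_mset h (M - {#x#}))"
      by (metis image_mset_add_mset sum_mset.insert)
    then show ?thesis by simp
  qed
  have "in_Gamma \<chi> \<theta> \<omega> \<longleftrightarrow> (\<forall>x\<in>#M. (\<Sum>i<n. arccot (g i)) - h x < \<theta>)"
    unfolding in_Gamma_def Let_def assms M_def[symmetric] h_def[symmetric] using sum_remove sum_M by simp
  also have "\<dots> \<longleftrightarrow> (\<forall>j<n. (\<Sum>i\<in>{..<n} - {j}. arccot (g i)) < \<theta>)"
    unfolding M_def h_def by (auto simp: sum_diff1)
  finally show ?thesis .
qed

section \<open>Comparison of relative eigenvalues\<close>

lemma quadratic_form_real_diag_mat:
  assumes a: "a \<in> carrier_vec n"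
  shows "Re ((real_diag_mat n d *\<^sub>v a) \<bullet>c a) = (\<Sum>i<n. d i * (cmod (a $ i))\<^sup>2)"
proof -
  have "real_diag_mat n d *\<^sub>v a = vec n (\<lambda>i. complex_of_real (d i) * a $ i)"
  proof (rule eq_vecI)
    fix i assume "i < dim_vec (vec n (\<lambda>i. complex_of_real (d i) * a $ i))"
    then have i: "i < n" by simp
    have "(real_diag_mat n d *\<^sub>v a) $ i = (\<Sum>k = 0..<n. real_diag_mat n d $$ (i, k) * a $ k)"
      using i a real_diag_mat_carrier[of n d] unfolding carrier_mat_def carrier_vec_def
      by (simp add: scalar_prod_def)
    also have "\<dots> = (\<Sum>k = 0..<n. if k = i then complex_of_real (d i) * a $ i else 0)"
      by (rule sum.cong) (use i in \<open>auto simp: real_diag_mat_def\<close>)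
    finally show "(real_diag_mat n d *\<^sub>v a) $ i = vec n (\<lambda>i. complex_of_real (d i) * a $ i) $ i"
      using i by simp
  qed (simp add: real_diag_mat_def)
  then have "(real_diag_mat n d *\<^sub>v a) \<bullet>c a = (\<Sum>i = 0..<n. complex_of_real (d i * (cmod (a $ i))\<^sup>2))"
    using a by (simp add: scalar_prod_def mult.assoc complex_norm_square[symmetric])
  then show ?thesis
    by (simp add: Re_sum lessThan_atLeast0)
qed

lemma rel_diagonalizes_quadratic_forms:
  assumes V: "rel_diagonalizes n \<chi> \<omega> V \<mu>" and C: "\<chi> \<in> carrier_mat n n" and O: "\<omega> \<in> carrier_mat n n"
    and a: "a \<in> carrier_vec n"
  shows "Re ((\<chi> *\<^sub>v (V *\<^sub>v a)) \<bullet>c (V *\<^sub>v a)) = (\<Sum>i<n. (cmod (a $ i))\<^sup>2)"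
    and "Re ((\<omega> *\<^sub>v (V *\<^sub>v a)) \<bullet>c (V *\<^sub>v a)) = (\<Sum>i<n. \<mu> i * (cmod (a $ i))\<^sup>2)"
proof -
  have Vc: "V \<in> carrier_mat n n" and VCV: "mat_adjoint V * \<chi> * V = real_diag_mat n (\<lambda>_. 1)"
    and VOV: "mat_adjoint V * \<omega> * V = real_diag_mat n \<mu>"
    using V real_diag_mat_one[of n "\<lambda>_. 1"] by (auto simp: rel_diagonalizes_def)
  show "Re ((\<chi> *\<^sub>v (V *\<^sub>v a)) \<bullet>c (V *\<^sub>v a)) = (\<Sum>i<n. (cmod (a $ i))\<^sup>2)"
    unfolding quadratic_form_congruence[OF Vc C a] VCV quadratic_form_real_diag_mat[OF a] by simp
  show "Re ((\<omega> *\<^sub>v (V *\<^sub>v a)) \<bullet>c (V *\<^sub>v a)) = (\<Sum>i<n. \<mu> i * (cmod (a $ i))\<^sup>2)"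
    unfolding quadratic_form_congruence[OF Vc O a] VOV quadratic_form_real_diag_mat[OF a] ..
qed

lemma rel_diagonalizes_mult_vec_eq_zero:
  assumes V: "rel_diagonalizes n \<chi> \<omega> V \<mu>" and C: "\<chi> \<in> carrier_mat n n"
    and a: "a \<in> carrier_vec n" and Va: "V *\<^sub>v a = 0\<^sub>v n"
  shows "a = 0\<^sub>v n"
proof -
  have Vc: "V \<in> carrier_mat n n" and VCV: "mat_adjoint V * \<chi> * V = 1\<^sub>m n"
    using V by (auto simp: rel_diagonalizes_def)
  have "a = (mat_adjoint V * \<chi> * V) *\<^sub>v a"
    using VCV a by simp
  also have "\<dots> = (mat_adjoint V * \<chi>) *\<^sub>v (V *\<^sub>v a)"
    by (rule assoc_mult_mat_vec[of _ n n _ n]) (use Vc C a in auto)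
  also have "\<dots> = 0\<^sub>v n"
    unfolding Va using Vc C by (intro eq_vecI) (auto simp: scalar_prod_def)
  finally show ?thesis .
qed

lemma nontrivial_kernel_of_wide:
  fixes A :: "complex mat"
  assumes A: "A \<in> carrier_mat n (Suc n)"
  obtains x where "x \<in> carrier_vec (Suc n)" and "x \<noteq> 0\<^sub>v (Suc n)" and "A *\<^sub>v x = 0\<^sub>v n"
proof -
  define Y where "Y = mat\<^sub>r (Suc n) (Suc n) (\<lambda>i. if i = n then 0\<^sub>v (Suc n) else row A i)"
  have "det Y = 0"
    unfolding Y_def by (rule det_row_0) (use A row_carrier[of A] in auto)
  then obtain x where x: "x \<in> carrier_vec (Suc n)" "x \<noteq> 0\<^sub>v (Suc n)" and Yx: "Y *\<^sub>v x = 0\<^sub>v (Suc n)"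
    using det_0_iff_vec_prod_zero[of Y "Suc n"] unfolding Y_def by auto
  have "A *\<^sub>v x = 0\<^sub>v n"
  proof (rule eq_vecI)
    fix i assume "i < dim_vec (0\<^sub>v n :: complex vec)"
    then have i: "i < n" by simp
    have "(Y *\<^sub>v x) $ i = row A i \<bullet> x"
      using i A unfolding Y_def by simp
    then show "(A *\<^sub>v x) $ i = 0\<^sub>v n $ i"
      using Yx i A by simp
  qed (use A in simp)
  with x that show thesis by blast
qed

lemma selection_mat_mult_vec:
  fixes x :: "complex vec"
  assumes x: "x \<in> carrier_vec m" and f: "\<And>i. i < n \<Longrightarrow> P i \<Longrightarrow> f i < m"
  shows "mat n m (\<lambda>(i, c). if c = f i \<and> P i then 1 else 0) *\<^sub>v x = vec n (\<lambda>i. if P i then x $ f i else 0)"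
proof (rule eq_vecI)
  fix i assume "i < dim_vec (vec n (\<lambda>i. if P i then x $ f i else 0))"
  then have i: "i < n" by simp
  have "(mat n m (\<lambda>(i, c). if c = f i \<and> P i then 1 else 0) *\<^sub>v x) $ i =
      (\<Sum>c = 0..<m. (if c = f i \<and> P i then 1 else 0) * x $ c)"
    using i x by (simp add: scalar_prod_def)
  also have "\<dots> = (\<Sum>c = 0..<m. if c = f i then (if P i then x $ f i else 0) else 0)"
    by (rule sum.cong) auto
  also have "\<dots> = (if P i then x $ f i else 0)"
    using f[OF i] by auto
  finally show "(mat n m (\<lambda>(i, c). if c = f i \<and> P i then 1 else 0) *\<^sub>v x) $ i =
      vec n (\<lambda>i. if P i then x $ f i else 0) $ i"
    using i by simp
qed simp

lemma split_vec_eq_zero: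
  fixes x :: "'a :: zero vec"
  assumes x: "x \<in> carrier_vec (Suc n)" and k: "k < n"
    and "vec n (\<lambda>i. if i \<le> k then x $ i else 0) = 0\<^sub>v n"
    and "vec n (\<lambda>i. if k \<le> i then x $ Suc i else 0) = 0\<^sub>v n"
  shows "x = 0\<^sub>v (Suc n)"
proof (rule eq_vecI)
  fix c assume "c < dim_vec (0\<^sub>v (Suc n) :: 'a vec)"
  then have c: "c < Suc n" by simp
  show "x $ c = 0\<^sub>v (Suc n) $ c"
  proof (cases "c \<le> k")
    case True
    then show ?thesis
      using arg_cong[OF assms(3), of "\<lambda>v. v $ c"] c k by simp
  next
    case False
    then obtain j where "c = Suc j" "k \<le> j" by (cases c) auto
    then show ?thesis
      using arg_cong[OF assms(4), of "\<lambda>v. v $ j"] c by simp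
  qed
qed (use x in simp)

lemma common_vector_prefix_suffix:
  fixes V\<^sub>0 V :: "complex mat"
  assumes V\<^sub>0: "V\<^sub>0 \<in> carrier_mat n n" and V: "V \<in> carrier_mat n n" and k: "k < n"
  obtains a b where "a \<in> carrier_vec n" and "b \<in> carrier_vec n" and "a \<noteq> 0\<^sub>v n \<or> b \<noteq> 0\<^sub>v n"
    and "\<And>i. k < i \<Longrightarrow> i < n \<Longrightarrow> a $ i = 0" and "\<And>i. i < k \<Longrightarrow> b $ i = 0"
    and "V\<^sub>0 *\<^sub>v a = V *\<^sub>v b"
proof -
  define E\<^sub>1 :: "complex mat" where "E\<^sub>1 = mat n (Suc n) (\<lambda>(i, c). if c = i \<and> i \<le> k then 1 else 0)"
  define E\<^sub>2 :: "complex mat" where "E\<^sub>2 = mat n (Suc n) (\<lambda>(i, c). if c = Suc i \<and> k \<le> i then 1 else 0)"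
  have E\<^sub>1: "E\<^sub>1 \<in> carrier_mat n (Suc n)" and E\<^sub>2: "E\<^sub>2 \<in> carrier_mat n (Suc n)"
    unfolding E\<^sub>1_def E\<^sub>2_def by auto
  have "V\<^sub>0 * E\<^sub>1 - V * E\<^sub>2 \<in> carrier_mat n (Suc n)"
    using V\<^sub>0 V E\<^sub>1 E\<^sub>2 by auto
  then obtain x where x: "x \<in> carrier_vec (Suc n)" "x \<noteq> 0\<^sub>v (Suc n)"
    and kernel: "(V\<^sub>0 * E\<^sub>1 - V * E\<^sub>2) *\<^sub>v x = 0\<^sub>v n"
    by (rule nontrivial_kernel_of_wide)
  define a where "a = vec n (\<lambda>i. if i \<le> k then x $ i else 0)"
  define b where "b = vec n (\<lambda>i. if k \<le> i then x $ Suc i else 0)"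
  have E\<^sub>1x: "E\<^sub>1 *\<^sub>v x = a" and E\<^sub>2x: "E\<^sub>2 *\<^sub>v x = b"
    unfolding E\<^sub>1_def E\<^sub>2_def a_def b_def by (auto intro!: selection_mat_mult_vec[OF x(1)])
  have diff: "V\<^sub>0 *\<^sub>v a - V *\<^sub>v b = 0\<^sub>v n"
    using kernel V\<^sub>0 V E\<^sub>1 E\<^sub>2 x
    by (simp add: minus_mult_distrib_mat_vec[of _ n "Suc n"] assoc_mult_mat_vec[of _ n n _ "Suc n"] E\<^sub>1x E\<^sub>2x)
  have "(V\<^sub>0 *\<^sub>v a) $ i = (V *\<^sub>v b) $ i" if "i < n" for i
    using arg_cong[OF diff, of "\<lambda>v. v $ i"] that V\<^sub>0 V by simp
  then have "V\<^sub>0 *\<^sub>v a = V *\<^sub>v b"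
    using V\<^sub>0 V by (intro eq_vecI) auto
  moreover have "a \<noteq> 0\<^sub>v n \<or> b \<noteq> 0\<^sub>v n"
    using split_vec_eq_zero[OF x(1) k] x(2) unfolding a_def b_def by blast
  ultimately show thesis
    using that[of a b] k unfolding a_def b_def by auto
qed

lemma smult_mat_mult_vec:
  fixes A :: "complex mat"
  assumes A: "A \<in> carrier_mat n n" and v: "v \<in> carrier_vec n"
  shows "(c \<cdot>\<^sub>m A) *\<^sub>v v = c \<cdot>\<^sub>v (A *\<^sub>v v)"
proof (rule eq_vecI)
  fix i assume "i < dim_vec (c \<cdot>\<^sub>v (A *\<^sub>v v))"
  then have i: "i < n" using A by simp
  have "row (c \<cdot>\<^sub>m A) i = c \<cdot>\<^sub>v row A i"
    by (rule eq_vecI) (use A i in auto)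
  then show "((c \<cdot>\<^sub>m A) *\<^sub>v v) $ i = (c \<cdot>\<^sub>v (A *\<^sub>v v)) $ i"
    using A i v by (simp add: smult_scalar_prod_distrib[of _ n])
qed (use A in simp)

lemma loewner_le_quadratic_form:
  assumes AB: "loewner_le n A B" and v: "v \<in> carrier_vec n"
  shows "Re ((A *\<^sub>v v) \<bullet>c v) \<le> Re ((B *\<^sub>v v) \<bullet>c v)"
proof -
  have A: "A \<in> carrier_mat n n" and B: "B \<in> carrier_mat n n"
    and psd: "0 \<le> Re (((B - A) *\<^sub>v v) \<bullet>c v)"
    using AB v unfolding loewner_le_def psd_def by auto
  have "((B - A) *\<^sub>v v) \<bullet>c v = (B *\<^sub>v v) \<bullet>c v - (A *\<^sub>v v) \<bullet>c v"
    using A B v by (simp add: minus_mult_distrib_mat_vec[of _ n n] minus_scalar_prod_distrib[of _ n])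
  with psd show ?thesis by simp
qed

lemma quadratic_form_smult_real:
  fixes A :: "complex mat"
  assumes A: "A \<in> carrier_mat n n" and v: "v \<in> carrier_vec n"
  shows "Re (((complex_of_real c \<cdot>\<^sub>m A) *\<^sub>v v) \<bullet>c v) = c * Re ((A *\<^sub>v v) \<bullet>c v)"
  using A v by (simp add: smult_mat_mult_vec[OF A v] smult_scalar_prod_distrib[of _ n])

lemma loewner_le_sandwich_quadratic_form:
  assumes low: "loewner_le n \<chi>\<^sub>0 \<chi>" and up: "loewner_le n \<chi> (complex_of_real (1 + e) \<cdot>\<^sub>m \<chi>\<^sub>0)"
    and w: "w \<in> carrier_vec n"
  shows "Re ((\<chi>\<^sub>0 *\<^sub>v w) \<bullet>c w) \<le> Re ((\<chi> *\<^sub>v w) \<bullet>c w)"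
    and "Re ((\<chi> *\<^sub>v w) \<bullet>c w) \<le> (1 + e) * Re ((\<chi>\<^sub>0 *\<^sub>v w) \<bullet>c w)"
proof -
  have "\<chi>\<^sub>0 \<in> carrier_mat n n"
    using low by (simp add: loewner_le_def)
  then show "Re ((\<chi> *\<^sub>v w) \<bullet>c w) \<le> (1 + e) * Re ((\<chi>\<^sub>0 *\<^sub>v w) \<bullet>c w)"
    using loewner_le_quadratic_form[OF up w] quadratic_form_smult_real[of \<chi>\<^sub>0 n w "1 + e"] w by simp
qed (rule loewner_le_quadratic_form[OF low w])

lemma pos_def_loewner_le:
  assumes "pos_def n \<chi>\<^sub>0" and "hermitian n \<chi>" and "loewner_le n \<chi>\<^sub>0 \<chi>"
  shows "pos_def n \<chi>"
  using assms loewner_le_quadratic_form[OF assms(3)] unfolding pos_def_def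
  by (meson order_less_le_trans)

lemma sum_cmod_sq_pos:
  assumes a: "a \<in> carrier_vec n" and a0: "a \<noteq> 0\<^sub>v n"
  shows "0 < (\<Sum>i<n. (cmod (a $ i))\<^sup>2)"
proof -
  obtain i where i: "i < n" and "a $ i \<noteq> 0"
    using a a0 by (metis eq_vecI carrier_vecD index_zero_vec)
  then have "0 < (cmod (a $ i))\<^sup>2" by simp
  also have "\<dots> \<le> (\<Sum>i<n. (cmod (a $ i))\<^sup>2)"
    by (rule member_le_sum) (use i in auto)
  finally show ?thesis .
qed

lemma le_max_of_rayleigh_bounds:
  fixes A B l m p e :: real
  assumes A: "0 < A" and AB: "A \<le> B" and BA: "B \<le> (1 + e) * A"
    and lp: "l * A \<le> p" and pm: "p \<le> m * B"
  shows "l \<le> max m ((1 + e) * m)"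
proof (cases "0 \<le> m")
  case True
  have "l * A \<le> ((1 + e) * m) * A"
    using lp pm mult_left_mono[OF BA True] by (simp add: algebra_simps)
  then show ?thesis
    using A by simp
next
  case False
  have "l * A \<le> m * A"
    using lp pm mult_left_mono_neg[OF AB, of m] False by linarith
  then show ?thesis
    using A by simp
qed

lemma sum_weighted_le:
  fixes f w :: "nat \<Rightarrow> real"
  assumes "\<And>i. i < n \<Longrightarrow> w i \<noteq> 0 \<Longrightarrow> f i \<le> c" and "\<And>i. 0 \<le> w i"
  shows "(\<Sum>i<n. f i * w i) \<le> c * (\<Sum>i<n. w i)"
  unfolding sum_distrib_left
proof (rule sum_mono)
  fix i assume "i \<in> {..<n}"
  then show "f i * w i \<le> c * w i"
    using assms by (cases "w i = 0") (auto intro: mult_right_mono)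
qed

lemma sum_weighted_ge:
  fixes f w :: "nat \<Rightarrow> real"
  assumes "\<And>i. i < n \<Longrightarrow> w i \<noteq> 0 \<Longrightarrow> c \<le> f i" and "\<And>i. 0 \<le> w i"
  shows "c * (\<Sum>i<n. w i) \<le> (\<Sum>i<n. f i * w i)"
  unfolding sum_distrib_left
proof (rule sum_mono)
  fix i assume "i \<in> {..<n}"
  then show "c * w i \<le> f i * w i"
    using assms by (cases "w i = 0") (auto intro: mult_right_mono)
qed

text \<open>Courant--Fischer: test both forms on a vector spanned by the first \<open>k + 1\<close> columns
  of \<open>V\<^sub>0\<close> and by the last \<open>n - k\<close> columns of \<open>V\<close>.\<close>

lemma rel_eigenvalue_comparison:
  assumes V\<^sub>0: "rel_diagonalizes n \<chi>\<^sub>0 \<omega> V\<^sub>0 l" and l: "antimono_on {..<n} l"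
    and V: "rel_diagonalizes n \<chi> \<omega> V m" and m: "antimono_on {..<n} m"
    and O: "\<omega> \<in> carrier_mat n n"
    and low: "loewner_le n \<chi>\<^sub>0 \<chi>" and up: "loewner_le n \<chi> (complex_of_real (1 + e) \<cdot>\<^sub>m \<chi>\<^sub>0)"
    and k: "k < n"
  shows "l k \<le> max (m k) ((1 + e) * m k)"
proof -
  have C\<^sub>0: "\<chi>\<^sub>0 \<in> carrier_mat n n" and C: "\<chi> \<in> carrier_mat n n"
    using low by (auto simp: loewner_le_def)
  have V\<^sub>0c: "V\<^sub>0 \<in> carrier_mat n n" and Vc: "V \<in> carrier_mat n n"
    using V\<^sub>0 V by (auto simp: rel_diagonalizes_def)
  obtain a b where a: "a \<in> carrier_vec n" and b: "b \<in> carrier_vec n" and ab: "a \<noteq> 0\<^sub>v n \<or> b \<noteq> 0\<^sub>v n"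
    and a_supp: "\<And>i. k < i \<Longrightarrow> i < n \<Longrightarrow> a $ i = 0" and b_supp: "\<And>i. i < k \<Longrightarrow> b $ i = 0"
    and w: "V\<^sub>0 *\<^sub>v a = V *\<^sub>v b"
    using common_vector_prefix_suffix[OF V\<^sub>0c Vc k] by blast
  have "V\<^sub>0 *\<^sub>v 0\<^sub>v n = 0\<^sub>v n" and "V *\<^sub>v 0\<^sub>v n = 0\<^sub>v n"
    using V\<^sub>0c Vc by auto
  then have "a \<noteq> 0\<^sub>v n"
    using ab w rel_diagonalizes_mult_vec_eq_zero[OF V\<^sub>0 C\<^sub>0 a] rel_diagonalizes_mult_vec_eq_zero[OF V C b]
    by auto
  have wc: "V *\<^sub>v b \<in> carrier_vec n"
    using Vc b by simp
  note forms\<^sub>0 = rel_diagonalizes_quadratic_forms[OF V\<^sub>0 C\<^sub>0 O a, unfolded w]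
  note forms = rel_diagonalizes_quadratic_forms[OF V C O b]
  define A where "A = (\<Sum>i<n. (cmod (a $ i))\<^sup>2)"
  define B where "B = (\<Sum>i<n. (cmod (b $ i))\<^sup>2)"
  have "0 < A"
    unfolding A_def by (rule sum_cmod_sq_pos[OF a \<open>a \<noteq> 0\<^sub>v n\<close>])
  moreover have "A \<le> B" and "B \<le> (1 + e) * A"
    using loewner_le_sandwich_quadratic_form[OF low up wc] unfolding forms\<^sub>0(1) forms(1) A_def B_def .
  moreover have "l k * A \<le> Re ((\<omega> *\<^sub>v (V *\<^sub>v b)) \<bullet>c (V *\<^sub>v b))"
    unfolding forms\<^sub>0(2) A_def
  proof (rule sum_weighted_ge)
    fix i assume "i < n" and "(cmod (a $ i))\<^sup>2 \<noteq> 0"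
    then have "i \<le> k"
      using a_supp by (cases "k < i") auto
    with \<open>i < n\<close> k show "l k \<le> l i"
      using monotone_onD[OF l] by simp
  qed simp
  moreover have "Re ((\<omega> *\<^sub>v (V *\<^sub>v b)) \<bullet>c (V *\<^sub>v b)) \<le> m k * B"
    unfolding forms(2) B_def
  proof (rule sum_weighted_le)
    fix i assume "i < n" and "(cmod (b $ i))\<^sup>2 \<noteq> 0"
    then have "k \<le> i"
      using b_supp by (cases "i < k") auto
    with \<open>i < n\<close> k show "m i \<le> m k"
      using monotone_onD[OF m] by simp
  qed simp
  ultimately show ?thesis
    by (rule le_max_of_rayleigh_bounds)
qed

section \<open>Estimates for arccot\<close>

lemma arctan_mvt:
  assumes "a < b"
  obtains z where "a < z" and "z < b" and "arctan b - arctan a = (b - a) / (1 + z\<^sup>2)"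
proof -
  have "\<And>x. a \<le> x \<Longrightarrow> x \<le> b \<Longrightarrow> DERIV arctan x :> inverse (1 + x\<^sup>2)"
    using DERIV_arctan by blast
  from MVT2[OF assms this] obtain z where "a < z" "z < b"
    and "arctan b - arctan a = (b - a) * inverse (1 + z\<^sup>2)"
    by blast
  with that show thesis
    by (simp add: divide_inverse)
qed

lemma arctan_diff_lower:
  assumes ab: "a \<le> b" and a: "\<bar>a\<bar> \<le> R" and b: "\<bar>b\<bar> \<le> R"
  shows "(b - a) / (1 + R\<^sup>2) \<le> arctan b - arctan a"
proof (cases "a = b")
  case False
  then obtain z where z: "a < z" "z < b" and eq: "arctan b - arctan a = (b - a) / (1 + z\<^sup>2)"
    using ab by (metis arctan_mvt order_le_neq_trans)
  have "\<bar>z\<bar> \<le> R"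
    using z a b by auto
  then have "z\<^sup>2 \<le> R\<^sup>2"
    by (metis abs_ge_zero power2_abs power_mono)
  then show ?thesis
    unfolding eq using ab by (intro divide_left_mono) (auto simp: add_pos_nonneg)
qed simp

lemma arctan_diff_upper:
  assumes a: "0 \<le> a" and ab: "a \<le> b"
  shows "arctan b - arctan a \<le> (b - a) / (1 + a\<^sup>2)"
proof (cases "a = b")
  case False
  then obtain z where z: "a < z" "z < b" and eq: "arctan b - arctan a = (b - a) / (1 + z\<^sup>2)"
    using ab by (metis arctan_mvt order_le_neq_trans)
  have "a\<^sup>2 \<le> z\<^sup>2"
    using z a by (intro power_mono) auto
  then show ?thesis
    unfolding eq using ab by (intro divide_left_mono) (auto simp: add_pos_nonneg)
qed simp

lemma arccot_pos: "0 < arccot x"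
  unfolding arccot_def using arctan_ubound[of x] by simp

lemma arccot_antimono: "x \<le> y \<Longrightarrow> arccot y \<le> arccot x"
  unfolding arccot_def by (simp add: arctan_le_iff)

lemma arccot_le_inverse:
  assumes "0 < x"
  shows "arccot x \<le> 1 / x"
proof -
  have "arctan (1 / x) - arctan 0 \<le> (1 / x - 0) / (1 + 0\<^sup>2)"
    by (rule arctan_diff_upper) (use assms in auto)
  then show ?thesis
    unfolding arccot_def using arctan_inverse[of x] assms by simp
qed

lemma arccot_lt_imp_gt:
  assumes "arccot x < \<theta>" and "\<theta> < pi"
  shows "- 1 / (pi - \<theta>) < x"
proof (rule ccontr)
  assume "\<not> - 1 / (pi - \<theta>) < x"
  then have x_le: "x \<le> - 1 / (pi - \<theta>)"
    by simp
  moreover have "- 1 / (pi - \<theta>) < 0"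
    using assms(2) by (simp add: divide_less_0_iff)
  ultimately have x_neg: "x < 0"
    by linarith
  have "arccot (- x) \<le> 1 / (- x)"
    by (rule arccot_le_inverse) (use x_neg in simp)
  also have "1 / (- x) \<le> pi - \<theta>"
    using x_le x_neg assms(2) by (simp add: field_simps)
  finally have "\<theta> \<le> arccot x"
    unfolding arccot_def by (simp add: arctan_minus)
  with assms(1) show False by simp
qed

lemma le_max_cases:
  fixes e l m :: real
  assumes e: "0 \<le> e" and lm: "l \<le> max m ((1 + e) * m)" and ml: "m < l"
  shows "0 \<le> m" and "l \<le> (1 + e) * m"
proof -
  show l: "l \<le> (1 + e) * m"
    using lm ml by (auto simp: max_def split: if_splits)
  show "0 \<le> m"
  proof (rule ccontr)
    assume "\<not> 0 \<le> m"
    then have "e * m \<le> 0"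
      using e by (simp add: mult_nonneg_nonpos)
    with l ml show False
      by (simp add: algebra_simps)
  qed
qed

lemma arccot_le_add_of_le_max:
  assumes e: "0 \<le> e" and lm: "l \<le> max m ((1 + e) * m)"
  shows "arccot m \<le> arccot l + e"
proof (cases "l \<le> m")
  case True
  then show ?thesis
    using arccot_antimono[OF True] e by simp
next
  case False
  then have "m < l"
    by simp
  note m = le_max_cases(1)[OF e lm this] and l = le_max_cases(2)[OF e lm this]
  have "arccot m - arccot l = arctan l - arctan m"
    unfolding arccot_def by simp
  also have "\<dots> \<le> (l - m) / (1 + m\<^sup>2)"
    by (rule arctan_diff_upper) (use m \<open>m < l\<close> in auto)
  also have "\<dots> \<le> e * m / (1 + m\<^sup>2)"
    using l by (intro divide_right_mono) (auto simp: algebra_simps)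
  also have "\<dots> \<le> e"
  proof -
    have "m \<le> 1 + m\<^sup>2"
    proof (cases "m \<le> 1")
      case False
      then have "m * 1 \<le> m * m"
        using m by (intro mult_left_mono) auto
      then show ?thesis
        by (simp add: power2_eq_square)
    qed (simp add: add_increasing2)
    then show ?thesis
      using e m by (simp add: divide_le_eq mult_left_mono add_pos_nonneg mult.commute)
  qed
  finally show ?thesis by simp
qed

lemma half_le_of_le_max:
  fixes e l m :: real
  assumes l: "0 \<le> l" and e: "0 \<le> e" "e \<le> 1" and lm: "l \<le> max m ((1 + e) * m)"
  shows "l / 2 \<le> m"
proof (cases "l \<le> m")
  case False
  then have "0 \<le> m" and "l \<le> (1 + e) * m"
    using le_max_cases[OF e(1) lm, of] by (simp_all add: not_le)
  moreover have "(1 + e) * m \<le> 2 * m"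
    using \<open>0 \<le> m\<close> e(2) by (simp add: mult_right_mono)
  ultimately show ?thesis by simp
qed (use l in simp)

lemma le_add_of_le_max:
  fixes e l m K \<delta> :: real
  assumes e: "0 \<le> e" and lm: "l \<le> max m ((1 + e) * m)" and lK: "l \<le> K" and eK: "e * K \<le> \<delta>"
    and \<delta>: "0 \<le> \<delta>"
  shows "l \<le> m + \<delta>"
proof (cases "l \<le> m")
  case False
  then have m: "0 \<le> m" and "l \<le> (1 + e) * m"
    using le_max_cases[OF e lm] by (simp_all add: not_le)
  then have "l - m \<le> e * m"
    by (simp add: algebra_simps)
  also have "\<dots> \<le> e * K"
    using False lK e by (intro mult_left_mono) auto
  finally show ?thesis
    using eK by simp
qed (use \<delta> in simp)

lemma arccot_sum_lt_of_large:
  fixes N :: nat and e \<delta> :: real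
  assumes \<theta>: "0 < \<theta>" and I: "finite I" "card I \<le> N" and e: "0 \<le> e" "e \<le> 1" and \<delta>: "0 \<le> \<delta>"
    and large: "\<And>i. i \<in> I \<Longrightarrow> 2 * (real N + 1) / \<theta> \<le> l i"
    and lm: "\<And>i. i \<in> I \<Longrightarrow> l i \<le> max (m i) ((1 + e) * m i)"
  shows "(\<Sum>i\<in>I. arccot (m i + \<delta>)) < \<theta>"
proof -
  have pos: "0 < (real N + 1) / \<theta>"
    using \<theta> by simp
  have each: "arccot (m i + \<delta>) \<le> \<theta> / (real N + 1)" if "i \<in> I" for i
  proof -
    have "l i / 2 \<le> m i"
      by (rule half_le_of_le_max[OF _ e lm[OF that]]) (use order_trans[OF _ large[OF that]] \<theta> in simp)
    moreover have "2 * (real N + 1) / \<theta> = 2 * ((real N + 1) / \<theta>)"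
      by simp
    ultimately have "(real N + 1) / \<theta> \<le> m i + \<delta>"
      using large[OF that] \<delta> by linarith
    then have "arccot (m i + \<delta>) \<le> arccot ((real N + 1) / \<theta>)"
      by (rule arccot_antimono)
    also have "\<dots> \<le> \<theta> / (real N + 1)"
      using arccot_le_inverse[OF pos] by simp
    finally show ?thesis .
  qed
  have "(\<Sum>i\<in>I. arccot (m i + \<delta>)) \<le> real (card I) * (\<theta> / (real N + 1))"
    using sum_bounded_above[of I "\<lambda>i. arccot (m i + \<delta>)" "\<theta> / (real N + 1)"] each by blast
  also have "\<dots> \<le> real N * (\<theta> / (real N + 1))"
    using I(2) \<theta> by (intro mult_right_mono) auto
  also have "\<dots> < \<theta>"
    using \<theta> by (simp add: field_simps)
  finally show ?thesis .
qed

lemma sum_le_of_one_gap: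
  fixes f g :: "'a \<Rightarrow> real"
  assumes I: "finite I" "card I \<le> N" and i\<^sub>0: "i\<^sub>0 \<in> I"
    and gap: "f i\<^sub>0 \<le> g i\<^sub>0 - c" and rest: "\<And>i. i \<in> I \<Longrightarrow> f i \<le> g i + e"
    and e: "0 \<le> e" and Ne: "real N * e \<le> c"
  shows "(\<Sum>i\<in>I. f i) \<le> (\<Sum>i\<in>I. g i)"
proof -
  have "(\<Sum>i\<in>I - {i\<^sub>0}. f i) \<le> (\<Sum>i\<in>I - {i\<^sub>0}. g i + e)"
    using rest by (intro sum_mono) auto
  also have "\<dots> = (\<Sum>i\<in>I - {i\<^sub>0}. g i) + real (card (I - {i\<^sub>0})) * e"
    by (simp add: sum.distrib)
  also have "real (card (I - {i\<^sub>0})) * e \<le> real N * e"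
    using I card_Diff1_le[of I i\<^sub>0] e by (intro mult_right_mono) auto
  finally have "(\<Sum>i\<in>I - {i\<^sub>0}. f i) \<le> (\<Sum>i\<in>I - {i\<^sub>0}. g i) + c"
    using Ne by simp
  then show ?thesis
    using gap sum.remove[OF I(1) i\<^sub>0, of f] sum.remove[OF I(1) i\<^sub>0, of g] by simp
qed

lemma arccot_shift_gap:
  assumes x: "arccot x < \<theta>" and \<theta>: "\<theta> < pi" and K: "0 \<le> K" "x < K" and \<delta>: "0 < \<delta>"
  shows "arccot (x + \<delta>) \<le> arccot x - \<delta> / (1 + (1 / (pi - \<theta>) + K + \<delta>)\<^sup>2)"
proof -
  have "- 1 / (pi - \<theta>) < x"
    by (rule arccot_lt_imp_gt[OF x \<theta>])
  moreover have "0 < 1 / (pi - \<theta>)"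
    using \<theta> by simp
  ultimately have "\<bar>x\<bar> \<le> 1 / (pi - \<theta>) + K + \<delta>" and "\<bar>x + \<delta>\<bar> \<le> 1 / (pi - \<theta>) + K + \<delta>"
    using K \<delta> unfolding abs_le_iff by (intro conjI; linarith)+
  from arctan_diff_lower[OF _ this] \<delta> show ?thesis
    unfolding arccot_def by simp
qed

lemma arccot_sum_le_of_small:
  fixes N :: nat and e K \<epsilon> :: real
  assumes \<theta>: "\<theta> < pi" and \<epsilon>: "0 < \<epsilon>" and I: "finite I" "card I \<le> N" and i\<^sub>0: "i\<^sub>0 \<in> I"
    and sum_l: "(\<Sum>i\<in>I. arccot (l i)) < \<theta>" and K: "0 \<le> K" "l i\<^sub>0 < K"
    and e: "0 \<le> e" "e * K \<le> \<epsilon>" "real N * e \<le> \<epsilon> / (1 + (1 / (pi - \<theta>) + K + \<epsilon>)\<^sup>2)"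
    and lm: "\<And>i. i \<in> I \<Longrightarrow> l i \<le> max (m i) ((1 + e) * m i)"
  shows "(\<Sum>i\<in>I. arccot (m i + 2 * \<epsilon>)) \<le> (\<Sum>i\<in>I. arccot (l i))"
proof -
  have "arccot (l i\<^sub>0) \<le> (\<Sum>i\<in>I. arccot (l i))"
    by (rule member_le_sum[OF i\<^sub>0]) (use arccot_pos less_imp_le I in auto)
  then have "arccot (l i\<^sub>0) < \<theta>"
    using sum_l by simp
  have "l i\<^sub>0 + \<epsilon> \<le> m i\<^sub>0 + 2 * \<epsilon>"
    using le_add_of_le_max[OF e(1) lm[OF i\<^sub>0] _ e(2)] K \<epsilon> by simp
  then have gap: "arccot (m i\<^sub>0 + 2 * \<epsilon>) \<le> arccot (l i\<^sub>0) - \<epsilon> / (1 + (1 / (pi - \<theta>) + K + \<epsilon>)\<^sup>2)"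
    using arccot_antimono arccot_shift_gap[OF \<open>arccot (l i\<^sub>0) < \<theta>\<close> \<theta> K \<epsilon>] by (meson order_trans)
  have rest: "arccot (m i + 2 * \<epsilon>) \<le> arccot (l i) + e" if "i \<in> I" for i
    using arccot_antimono[of "m i" "m i + 2 * \<epsilon>"] arccot_le_add_of_le_max[OF e(1) lm[OF that]] \<epsilon>
    by simp
  show ?thesis
    by (rule sum_le_of_one_gap[where f = "\<lambda>i. arccot (m i + 2 * \<epsilon>)" and g = "\<lambda>i. arccot (l i)",
          OF I i\<^sub>0 gap rest e(1,3)])
qed

lemma arccot_sum_perturbation:
  fixes \<theta> \<epsilon>\<^sub>1 :: real and N :: nat
  assumes \<theta>: "0 < \<theta>" "\<theta> < pi" and \<epsilon>\<^sub>1: "0 < \<epsilon>\<^sub>1"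
  obtains \<epsilon>\<^sub>2 where "0 < \<epsilon>\<^sub>2"
    and "\<And>I l m. finite I \<Longrightarrow> card I \<le> N \<Longrightarrow> (\<Sum>i\<in>I. arccot (l i)) < \<theta> \<Longrightarrow>
          (\<And>i. i \<in> I \<Longrightarrow> l i \<le> max (m i) ((1 + \<epsilon>\<^sub>2) * m i)) \<Longrightarrow>
          (\<Sum>i\<in>I. arccot (m i + 2 * \<epsilon>\<^sub>1)) < \<theta>"
proof -
  define K where "K = 2 * (real N + 1) / \<theta>"
  define c where "c = \<epsilon>\<^sub>1 / (1 + (1 / (pi - \<theta>) + K + \<epsilon>\<^sub>1)\<^sup>2)"
  define e where "e = min 1 (min (\<epsilon>\<^sub>1 / K) (c / (real N + 1)))"
  have K: "0 < K" and c: "0 < c"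
    using \<theta> \<epsilon>\<^sub>1 by (auto simp: K_def c_def add_pos_nonneg)
  have e: "0 < e" "e \<le> 1" and "e \<le> \<epsilon>\<^sub>1 / K" "e \<le> c / (real N + 1)"
    using K c \<epsilon>\<^sub>1 by (auto simp: e_def)
  then have eK: "e * K \<le> \<epsilon>\<^sub>1" and Ne: "real N * e \<le> c"
    using K by (auto simp: le_divide_eq algebra_simps)
  show thesis
  proof (rule that[OF e(1)])
    fix I :: "'a set" and l m :: "'a \<Rightarrow> real"
    assume I: "finite I" "card I \<le> N" and sum_l: "(\<Sum>i\<in>I. arccot (l i)) < \<theta>"
      and lm: "\<And>i. i \<in> I \<Longrightarrow> l i \<le> max (m i) ((1 + e) * m i)"
    show "(\<Sum>i\<in>I. arccot (m i + 2 * \<epsilon>\<^sub>1)) < \<theta>"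
    proof (cases "\<forall>i\<in>I. K \<le> l i")
      case True
      then show ?thesis
        using arccot_sum_lt_of_large[OF \<theta>(1) I, of e "2 * \<epsilon>\<^sub>1" l m] e \<epsilon>\<^sub>1 lm unfolding K_def by auto
    next
      case False
      then obtain i\<^sub>0 where "i\<^sub>0 \<in> I" and "l i\<^sub>0 < K"
        by auto
      with arccot_sum_le_of_small[OF \<theta>(2) \<epsilon>\<^sub>1 I _ sum_l, of i\<^sub>0 K e m] K e eK Ne lm sum_l
      show ?thesis
        unfolding c_def by force
    qed
  qed
qed

theorem lemma2p5:
  fixes n :: nat and \<theta> \<epsilon>\<^sub>1 :: real
  assumes "n \<ge> 1" and "0 < \<theta>" and "\<theta> < pi" and "\<epsilon>\<^sub>1 > 0"
  shows "\<exists>\<epsilon>\<^sub>2 > 0. \<forall>\<chi>\<^sub>0 \<omega> \<chi> :: complex mat.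
           pos_def n \<chi>\<^sub>0 \<longrightarrow> hermitian n \<omega> \<longrightarrow> in_Gamma \<chi>\<^sub>0 \<theta> \<omega> \<longrightarrow>
           hermitian n \<chi> \<longrightarrow> loewner_le n \<chi>\<^sub>0 \<chi> \<longrightarrow>
           loewner_le n \<chi> (complex_of_real (1 + \<epsilon>\<^sub>2) \<cdot>\<^sub>m \<chi>\<^sub>0) \<longrightarrow>
           in_Gamma \<chi> \<theta> (\<omega> + complex_of_real (2 * \<epsilon>\<^sub>1) \<cdot>\<^sub>m \<chi>)"
proof -
  obtain \<epsilon>\<^sub>2 where \<epsilon>\<^sub>2: "0 < \<epsilon>\<^sub>2"
    and perturb: "\<And>(I :: nat set) l m. finite I \<Longrightarrow> card I \<le> n \<Longrightarrow> (\<Sum>i\<in>I. arccot (l i)) < \<theta> \<Longrightarrow>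
      (\<And>i. i \<in> I \<Longrightarrow> l i \<le> max (m i) ((1 + \<epsilon>\<^sub>2) * m i)) \<Longrightarrow> (\<Sum>i\<in>I. arccot (m i + 2 * \<epsilon>\<^sub>1)) < \<theta>"
    using arccot_sum_perturbation[OF assms(2-4)] by blast
  have "in_Gamma \<chi> \<theta> (\<omega> + complex_of_real (2 * \<epsilon>\<^sub>1) \<cdot>\<^sub>m \<chi>)"
    if \<chi>\<^sub>0: "pos_def n \<chi>\<^sub>0" and \<omega>: "hermitian n \<omega>" and \<Gamma>\<^sub>0: "in_Gamma \<chi>\<^sub>0 \<theta> \<omega>" and \<chi>: "hermitian n \<chi>"
      and low: "loewner_le n \<chi>\<^sub>0 \<chi>" and up: "loewner_le n \<chi> (complex_of_real (1 + \<epsilon>\<^sub>2) \<cdot>\<^sub>m \<chi>\<^sub>0)"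
    for \<chi>\<^sub>0 \<omega> \<chi>
  proof -
    have C\<^sub>0: "\<chi>\<^sub>0 \<in> carrier_mat n n" and C: "\<chi> \<in> carrier_mat n n" and O: "\<omega> \<in> carrier_mat n n"
      using low \<omega> by (auto simp: loewner_le_def hermitian_def)
    obtain V\<^sub>0 l where V\<^sub>0: "rel_diagonalizes n \<chi>\<^sub>0 \<omega> V\<^sub>0 l" and l: "antimono_on {..<n} l"
      using rel_diagonalizes_exists[OF \<chi>\<^sub>0 \<omega>] .
    obtain V m where V: "rel_diagonalizes n \<chi> \<omega> V m" and m: "antimono_on {..<n} m"
      using rel_diagonalizes_exists[OF pos_def_loewner_le[OF \<chi>\<^sub>0 \<chi> low] \<omega>] .
    have "(\<Sum>i\<in>{..<n} - {j}. arccot (l i)) < \<theta>" if "j < n" for j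
      using \<Gamma>\<^sub>0 that unfolding in_Gamma_iff[OF rel_eigenvalues_rel_diagonalizes[OF V\<^sub>0 C\<^sub>0 O]] by blast
    then have "(\<Sum>i\<in>{..<n} - {j}. arccot (m i + 2 * \<epsilon>\<^sub>1)) < \<theta>" if "j < n" for j
      using perturb[of "{..<n} - {j}" l m] that rel_eigenvalue_comparison[OF V\<^sub>0 l V m O low up]
      by (auto simp: card_Diff1_le)
    moreover have "\<omega> + complex_of_real (2 * \<epsilon>\<^sub>1) \<cdot>\<^sub>m \<chi> \<in> carrier_mat n n"
      using C O by simp
    ultimately show ?thesis
      using in_Gamma_iff[OF rel_eigenvalues_rel_diagonalizes[OF rel_diagonalizes_add_smult[OF V C O] C]]
      by blast
  qed
  with \<epsilon>\<^sub>2 show ?thesis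
    by blast
qed

end
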